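(* Let $L$ be an oriented classical or virtual link with $n$ components. The forbidden matrix $\mathcal{FM}(L)\in M_n(\mathbb{Z})$ is an invariant of classical and virtual links up to conjugation by a permutation matrix.
   Context: An oriented (classical or virtual) link with $n$ components is represented by a signed Gauss diagram: $n$ oriented circles, one per component, with arrows from over-crossing point to under-crossing point, each arrow carrying the sign $\pm1$ of its crossing; virtual links are equivalence classes of such diagrams under Gauss-diagram Reidemeister moves. The forbidden moves are: interchange two adjacent arrowheads, or two adjacent arrow tails, on a circle. Using forbidden and Reidemeister moves, a Gauss diagram can be reduced to one with no arrow having both endpoints on the same circle and in which, for each ordered pair $(j,k)$ of distinct circles, all arrows from circle $j$ to circle $k$ have the same sign. The forbidden quiver $\mathcal{FQ}(L)$ is obtained by shrinking each circle of this reduced diagram to a vertex; $m$ parallel arrows of sign $\varepsilon$ from vertex $j$ to vertex $k$ are recorded as a single arrow with integer label $\varepsilon m$. The forbidden matrix $\mathcal{FM}(L)$ is the $n\times n$ integer matrix whose entry in row $j$, column $k$ is the label on the arrow from vertex $j$ to vertex $k$ of $\mathcal{FQ}(L)$ (and $0$ if there is no such arrow; in particular the diagonal is $0$). *)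

theory Defs
  imports "HOL-Combinatorics.Permutations"
begin

text \<open>An endpoint is a pair (a, h): arrow label a, h = True for the arrowhead
  (under-crossing), h = False for the arrow tail (over-crossing).
  A diagram is a list of n words (one per circle, read along the orientation
  of the circle, considered cyclically) together with a sign function on labels.\<close>

type_synonym endpt = "nat \<times> bool"
type_synonym gauss = "endpt list list \<times> (nat \<Rightarrow> int)"

definition labels :: "gauss \<Rightarrow> nat set" where
  "labels D = {a. \<exists>w\<in>set (fst D). (a, True) \<in> set w \<or> (a, False) \<in> set w}"

definition wf_gauss :: "gauss \<Rightarrow> bool" where
  "wf_gauss D \<longleftrightarrow> (\<forall>a\<in>labels D.
      count_list (concat (fst D)) (a, True) = 1 \<and>
      count_list (concat (fst D)) (a, False) = 1 \<and>
      (snd D a = 1 \<or> snd D a = -1))"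

definition gauss_iso :: "gauss \<Rightarrow> gauss \<Rightarrow> bool" where
  "gauss_iso D D' \<longleftrightarrow> (\<exists>f \<sigma> r.
      length (fst D') = length (fst D) \<and>
      \<sigma> permutes {..<length (fst D)} \<and>
      inj_on f (labels D) \<and>
      (\<forall>i<length (fst D). fst D' ! i = rotate (r i) (map (apfst f) (fst D ! \<sigma> i))) \<and>
      (\<forall>a\<in>labels D. snd D' (f a) = snd D a))"

definition ins_seg :: "endpt list list \<Rightarrow> nat \<Rightarrow> nat \<Rightarrow> endpt list \<Rightarrow> endpt list list" where
  "ins_seg ws i p seg = ws[i := take p (ws ! i) @ seg @ drop p (ws ! i)]"

definition adj :: "endpt list list \<Rightarrow> endpt \<Rightarrow> endpt \<Rightarrow> bool" where
  "adj ws x y \<longleftrightarrow> (\<exists>i xs ys. i < length ws \<and> ws ! i = xs @ [x, y] @ ys)"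

definition swp :: "endpt \<Rightarrow> endpt \<Rightarrow> endpt \<Rightarrow> endpt" where
  "swp x y e = (if e = x then y else if e = y then x else e)"

definition r1_move :: "gauss \<Rightarrow> gauss \<Rightarrow> bool" where
  "r1_move D D' \<longleftrightarrow> (\<exists>i p a e1 e2.
      i < length (fst D) \<and> p \<le> length (fst D ! i) \<and> a \<notin> labels D \<and>
      ((e1, e2) = ((a, False), (a, True)) \<or> (e1, e2) = ((a, True), (a, False))) \<and>
      fst D' = ins_seg (fst D) i p [e1, e2] \<and>
      (snd D' a = 1 \<or> snd D' a = -1) \<and>
      (\<forall>x\<in>labels D. snd D' x = snd D x))"

definition r2_move :: "gauss \<Rightarrow> gauss \<Rightarrow> bool" where
  "r2_move D D' \<longleftrightarrow> (\<exists>i p j q a b H.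
      a \<noteq> b \<and> a \<notin> labels D \<and> b \<notin> labels D \<and>
      i < length (fst D) \<and> p \<le> length (fst D ! i) \<and>
      j < length (fst D) \<and>
      q \<le> length (ins_seg (fst D) i p [(a, False), (b, False)] ! j) \<and>
      (j = i \<longrightarrow> q \<noteq> p + 1) \<and>
      (H = [(a, True), (b, True)] \<or> H = [(b, True), (a, True)]) \<and>
      fst D' = ins_seg (ins_seg (fst D) i p [(a, False), (b, False)]) j q H \<and>
      (snd D' a = 1 \<or> snd D' a = -1) \<and> snd D' b = - snd D' a \<and>
      (\<forall>x\<in>labels D. snd D' x = snd D x))"

text \<open>Reidemeister move 3: arrows a : T\<rightarrow>M, b : T\<rightarrow>B, c : M\<rightarrow>B
  (top, middle, bottom strand), whose endpoints form three segments of two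
  adjacent endpoints each; the move reverses the order on each segment.
  The side conditions describe exactly the sign/order configurations that occur
  for three oriented strands in the plane (signs of a, b, c are the crossing signs).\<close>
definition r3_move :: "gauss \<Rightarrow> gauss \<Rightarrow> bool" where
  "r3_move D D' \<longleftrightarrow> (\<exists>a b c. let ws = fst D; s = snd D;
        oT = adj ws (a, False) (b, False);
        oM = adj ws (a, True) (c, False);
        oB = adj ws (b, True) (c, True) in
      distinct [a, b, c] \<and> a \<in> labels D \<and> b \<in> labels D \<and> c \<in> labels D \<and>
      (oT \<or> adj ws (b, False) (a, False)) \<and>
      (oM \<or> adj ws (c, False) (a, True)) \<and>
      (oB \<or> adj ws (c, True) (b, True)) \<and>
      ((oT \<noteq> oM) \<longleftrightarrow> s b \<noteq> s c) \<and>
      ((oM \<noteq> oB) \<longleftrightarrow> s a \<noteq> s b) \<and>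
      snd D' = s \<and>
      fst D' = map (map (swp (a, False) (b, False) \<circ> swp (a, True) (c, False)
                          \<circ> swp (b, True) (c, True))) ws)"

definition forb_move :: "gauss \<Rightarrow> gauss \<Rightarrow> bool" where
  "forb_move D D' \<longleftrightarrow> (\<exists>x y h. x \<noteq> y \<and> adj (fst D) (x, h) (y, h) \<and>
      fst D' = map (map (swp (x, h) (y, h))) (fst D) \<and> snd D' = snd D)"

definition reid_step :: "gauss \<Rightarrow> gauss \<Rightarrow> bool" where
  "reid_step D D' \<longleftrightarrow> wf_gauss D \<and> wf_gauss D' \<and>
     (gauss_iso D D' \<or> r1_move D D' \<or> r2_move D D' \<or> r3_move D D')"

definition reid_equiv :: "gauss \<Rightarrow> gauss \<Rightarrow> bool" where
  "reid_equiv = (\<lambda>D D'. reid_step D D' \<or> reid_step D' D)\<^sup>*\<^sup>*"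

definition forb_step :: "gauss \<Rightarrow> gauss \<Rightarrow> bool" where
  "forb_step D D' \<longleftrightarrow> reid_step D D' \<or> (wf_gauss D \<and> wf_gauss D' \<and> forb_move D D')"

definition forb_equiv :: "gauss \<Rightarrow> gauss \<Rightarrow> bool" where
  "forb_equiv = (\<lambda>D D'. forb_step D D' \<or> forb_step D' D)\<^sup>*\<^sup>*"

definition arrow_from :: "gauss \<Rightarrow> nat \<Rightarrow> nat \<Rightarrow> nat \<Rightarrow> bool" where
  "arrow_from D a j k \<longleftrightarrow> j < length (fst D) \<and> k < length (fst D) \<and>
     (a, False) \<in> set (fst D ! j) \<and> (a, True) \<in> set (fst D ! k)"

definition reduced :: "gauss \<Rightarrow> bool" where
  "reduced D \<longleftrightarrow> wf_gauss D \<and>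
     (\<forall>a j. \<not> arrow_from D a j j) \<and>
     (\<forall>a b j k. arrow_from D a j k \<and> arrow_from D b j k \<longrightarrow> snd D a = snd D b)"

text \<open>Forbidden matrix entry (j,k) (indices < n): the label \<epsilon> m of the
  forbidden-quiver arrow j \<rightarrow> k, i.e. m parallel arrows of common sign \<epsilon>,
  0 if none.\<close>
definition forb_matrix :: "gauss \<Rightarrow> nat \<Rightarrow> nat \<Rightarrow> int" where
  "forb_matrix D j k =
     (let A = {a. arrow_from D a j k} in
      if A = {} then 0 else snd D (SOME a. a \<in> A) * int (card A))"

end

theory Submission
  imports Defs
begin

text \<open>For \<open>j \<noteq> k\<close> let \<open>lk(j, k)\<close> be the signed number of arrows from circle \<open>j\<close> to
  circle \<open>k\<close>. It is unchanged by R1 (the new arrow joins a circle to itself), by R2 (the two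
  new arrows have opposite signs), and by R3 and the forbidden moves (which only permute
  endpoints within each circle); renumbering the circles permutes its rows and columns.
  On a reduced diagram there are no self-arrows and all arrows from \<open>j\<close> to \<open>k\<close> have one
  sign, so the forbidden matrix is exactly \<open>lk\<close>.\<close>

definition perm_similar :: "nat \<Rightarrow> (nat \<Rightarrow> nat \<Rightarrow> 'a) \<Rightarrow> (nat \<Rightarrow> nat \<Rightarrow> 'a) \<Rightarrow> bool" where
  "perm_similar n M M' \<longleftrightarrow>
     (\<exists>\<sigma>. \<sigma> permutes {..<n} \<and> (\<forall>j<n. \<forall>k<n. M' j k = M (\<sigma> j) (\<sigma> k)))"

lemma perm_similar_refl: "perm_similar n M M"
  unfolding perm_similar_def using permutes_id by fastforce

lemma perm_similar_sym:
  assumes "perm_similar n M M'"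
  shows "perm_similar n M' M"
proof -
  obtain \<sigma> where \<sigma>: "\<sigma> permutes {..<n}" and M': "\<forall>j<n. \<forall>k<n. M' j k = M (\<sigma> j) (\<sigma> k)"
    using assms unfolding perm_similar_def by blast
  have "M j k = M' (inv \<sigma> j) (inv \<sigma> k)" if "j < n" "k < n" for j k
    using M' permutes_in_image[OF permutes_inv[OF \<sigma>]] permutes_inverses(1)[OF \<sigma>] that
    by (metis lessThan_iff)
  then show ?thesis
    unfolding perm_similar_def using permutes_inv[OF \<sigma>] by blast
qed

lemma perm_similar_trans:
  assumes "perm_similar n M M'" and "perm_similar n M' M''"
  shows "perm_similar n M M''"
proof -
  obtain \<sigma> where \<sigma>: "\<sigma> permutes {..<n}" and M': "\<forall>j<n. \<forall>k<n. M' j k = M (\<sigma> j) (\<sigma> k)"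
    using assms(1) unfolding perm_similar_def by blast
  obtain \<tau> where \<tau>: "\<tau> permutes {..<n}" and M'': "\<forall>j<n. \<forall>k<n. M'' j k = M' (\<tau> j) (\<tau> k)"
    using assms(2) unfolding perm_similar_def by blast
  have "M'' j k = M ((\<sigma> \<circ> \<tau>) j) ((\<sigma> \<circ> \<tau>) k)" if "j < n" "k < n" for j k
    using M' M'' permutes_in_image[OF \<tau>] that by simp
  then show ?thesis
    unfolding perm_similar_def using permutes_compose[OF \<tau> \<sigma>] by blast
qed

lemma rtranclp_sym_closure_imp_equivp:
  assumes "equivp P" and "\<And>x y. r x y \<Longrightarrow> P x y"
    and "(\<lambda>x y. r x y \<or> r y x)\<^sup>*\<^sup>* x y"
  shows "P x y"
proof -
  have "(\<lambda>x y. r x y \<or> r y x) \<le> P"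
    using assms(2) equivp_symp[OF assms(1)] by (intro predicate2I) blast
  then have "(\<lambda>x y. r x y \<or> r y x)\<^sup>*\<^sup>* \<le> P\<^sup>*\<^sup>*"
    by (rule rtranclp_mono)
  then have "P\<^sup>*\<^sup>* x y"
    using assms(3) by (rule predicate2D)
  moreover have "P\<^sup>*\<^sup>* = P"
    using assms(1) by (intro rtranclp_ident_if_reflp_and_transp) (auto simp: equivp_reflp_symp_transp)
  ultimately show ?thesis
    by simp
qed

lemma finite_labels: "finite (labels D)"
proof (rule finite_subset)
  show "labels D \<subseteq> fst ` set (concat (fst D))"
    unfolding labels_def by force
qed simp

lemma arrow_from_labels: "arrow_from D a j k \<Longrightarrow> a \<in> labels D"
  unfolding arrow_from_def labels_def by (auto dest: nth_mem)

lemma finite_arrows: "finite {a. arrow_from D a j k}"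
proof (rule finite_subset[OF _ finite_labels])
  show "{a. arrow_from D a j k} \<subseteq> labels D"
    using arrow_from_labels by blast
qed

lemma notin_labels_notin_circle:
  "a \<notin> labels D \<Longrightarrow> m < length (fst D) \<Longrightarrow> (a, h) \<notin> set (fst D ! m)"
  unfolding labels_def by (cases h) (auto dest: nth_mem)

lemma count_list_concat: "count_list (concat ws) x = (\<Sum>w\<leftarrow>ws. count_list w x)"
  by (induction ws) auto

lemma wf_gauss_endpt_unique_circle:
  assumes wf: "wf_gauss D" and i: "i < length (fst D)" and m: "m < length (fst D)"
    and e_i: "e \<in> set (fst D ! i)" and e_m: "e \<in> set (fst D ! m)"
  shows "i = m"
proof (rule ccontr)
  assume "i \<noteq> m"
  obtain a h where e: "e = (a, h)"
    by fastforce
  have "a \<in> labels D"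
    using notin_labels_notin_circle i e_i e by blast
  then have "(\<Sum>l<length (fst D). count_list (fst D ! l) e) = 1"
    using wf e unfolding wf_gauss_def
    by (cases h) (auto simp: count_list_concat sum_list_sum_nth atLeast0LessThan)
  moreover have "(\<Sum>l\<in>{i, m}. count_list (fst D ! l) e) \<le> (\<Sum>l<length (fst D). count_list (fst D ! l) e)"
    by (rule sum_mono2) (use i m in auto)
  ultimately have "count_list (fst D ! i) e + count_list (fst D ! m) e \<le> 1"
    using \<open>i \<noteq> m\<close> by simp
  moreover have "count_list (fst D ! i) e \<noteq> 0" "count_list (fst D ! m) e \<noteq> 0"
    using e_i e_m by (simp_all add: count_list_0_iff)
  ultimately show False
    by simp
qed

lemma adj_same_circle:
  assumes wf: "wf_gauss D" and "adj (fst D) x y" and m: "m < length (fst D)"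
  shows "x \<in> set (fst D ! m) \<longleftrightarrow> y \<in> set (fst D ! m)"
proof -
  obtain i xs ys where i: "i < length (fst D)" and "fst D ! i = xs @ [x, y] @ ys"
    using assms(2) unfolding adj_def by blast
  then have "x \<in> set (fst D ! i)" "y \<in> set (fst D ! i)"
    by auto
  then show ?thesis
    using wf_gauss_endpt_unique_circle[OF wf i m] by blast
qed

lemma swp_eq_transpose: "swp = Transposition.transpose"
  by (simp add: fun_eq_iff swp_def transpose_def)

lemma length_ins_seg [simp]: "length (ins_seg ws i p seg) = length ws"
  unfolding ins_seg_def by simp

lemma set_ins_seg:
  assumes "i < length ws"
  shows "set (ins_seg ws i p seg ! m) = set (ws ! m) \<union> (if m = i then set seg else {})"
proof -
  have "set (take p (ws ! i) @ seg @ drop p (ws ! i)) = set (ws ! i) \<union> set seg"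
    by (metis Un_assoc Un_commute append_take_drop_id set_append)
  then show ?thesis
    using assms unfolding ins_seg_def by (simp add: nth_list_update)
qed

lemma circle_labels_subset:
  assumes "m < length (fst D)"
  shows "fst ` set (fst D ! m) \<subseteq> labels D"
proof
  fix a
  assume "a \<in> fst ` set (fst D ! m)"
  then obtain h where "(a, h) \<in> set (fst D ! m)"
    by force
  then show "a \<in> labels D"
    using nth_mem[OF assms] unfolding labels_def by (cases h) auto
qed

lemma mem_apfst_image_iff:
  assumes "inj_on f A" and "fst ` S \<subseteq> A" and "a \<in> A"
  shows "(f a, h) \<in> apfst f ` S \<longleftrightarrow> (a, h) \<in> S"
  using assms by (force simp: apfst_def map_prod_def dest: inj_onD)

text \<open>For \<open>j \<noteq> k\<close> this is the ordered virtual linking number of components \<open>j\<close>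
  and \<open>k\<close>. The diagonal is set to 0, since R1 changes the number of self-arrows.\<close>

definition linking_matrix :: "gauss \<Rightarrow> nat \<Rightarrow> nat \<Rightarrow> int" where
  "linking_matrix D j k = (if j = k then 0 else \<Sum>a | arrow_from D a j k. snd D a)"

definition linking_equiv :: "gauss \<Rightarrow> gauss \<Rightarrow> bool" where
  "linking_equiv D D' \<longleftrightarrow> length (fst D') = length (fst D) \<and>
     perm_similar (length (fst D)) (linking_matrix D) (linking_matrix D')"

lemma equivp_linking_equiv: "equivp linking_equiv"
proof (rule equivpI)
  show "reflp linking_equiv"
    by (rule reflpI) (simp add: linking_equiv_def perm_similar_refl)
  show "symp linking_equiv"
    by (rule sympI) (auto simp: linking_equiv_def intro: perm_similar_sym)
  show "transp linking_equiv"
    by (rule transpI) (auto simp: linking_equiv_def intro: perm_similar_trans)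
qed

lemma linking_equiv_eqI:
  "length (fst D') = length (fst D) \<Longrightarrow> linking_matrix D' = linking_matrix D \<Longrightarrow> linking_equiv D D'"
  unfolding linking_equiv_def by (simp add: perm_similar_refl)

lemma arrows_extend:
  assumes len: "length (fst D') = length (fst D)"
    and circles: "\<And>m. m < length (fst D) \<Longrightarrow> set (fst D' ! m) = set (fst D ! m) \<union> N m"
    and fresh: "\<And>m a h. (a, h) \<in> N m \<Longrightarrow> a \<notin> labels D"
  shows "{a. arrow_from D' a j k} = {a. arrow_from D a j k} \<union>
           {a. j < length (fst D) \<and> k < length (fst D) \<and> (a, False) \<in> N j \<and> (a, True) \<in> N k}"
  using notin_labels_notin_circle[of _ D] fresh
  by (auto simp: arrow_from_def len circles dest: arrow_from_labels)

lemma linking_matrix_extend: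
  assumes len: "length (fst D') = length (fst D)"
    and circles: "\<And>m. m < length (fst D) \<Longrightarrow> set (fst D' ! m) = set (fst D ! m) \<union> N m"
    and fresh: "\<And>m a h. (a, h) \<in> N m \<Longrightarrow> a \<notin> labels D"
    and signs: "\<forall>a\<in>labels D. snd D' a = snd D a"
    and new_cancel: "\<And>j k. j \<noteq> k \<Longrightarrow> j < length (fst D) \<Longrightarrow> k < length (fst D) \<Longrightarrow>
       (\<Sum>a | (a, False) \<in> N j \<and> (a, True) \<in> N k. snd D' a) = 0"
  shows "linking_matrix D' = linking_matrix D"
proof (intro ext)
  fix j k
  let ?old = "{a. arrow_from D a j k}"
  let ?new = "{a. j < length (fst D) \<and> k < length (fst D) \<and> (a, False) \<in> N j \<and> (a, True) \<in> N k}"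
  have arrows: "{a. arrow_from D' a j k} = ?old \<union> ?new"
    by (rule arrows_extend[OF len circles fresh])
  have "finite ?new"
    using finite_arrows[of D' j k] unfolding arrows by simp
  moreover have "?old \<inter> ?new = {}"
    using fresh arrow_from_labels by blast
  ultimately have "(\<Sum>a | arrow_from D' a j k. snd D' a) = (\<Sum>a\<in>?old. snd D' a) + (\<Sum>a\<in>?new. snd D' a)"
    unfolding arrows by (simp add: finite_arrows sum.union_disjoint)
  also have "(\<Sum>a\<in>?old. snd D' a) = (\<Sum>a\<in>?old. snd D a)"
    using signs arrow_from_labels by (auto intro: sum.cong)
  finally show "linking_matrix D' j k = linking_matrix D j k"
    using new_cancel by (cases "j < length (fst D) \<and> k < length (fst D)") (auto simp: linking_matrix_def)
qed

lemma linking_matrix_same_circles: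
  assumes "length (fst D') = length (fst D)"
    and "\<And>m. m < length (fst D) \<Longrightarrow> set (fst D' ! m) = set (fst D ! m)"
    and "snd D' = snd D"
  shows "linking_matrix D' = linking_matrix D"
  by (rule linking_matrix_extend[where N = "\<lambda>_. {}"]) (use assms in auto)

lemma linking_matrix_r1_move:
  assumes "r1_move D D'"
  shows "linking_matrix D' = linking_matrix D"
proof -
  obtain i p a e1 e2 where i: "i < length (fst D)" and a: "a \<notin> labels D"
    and e: "(e1, e2) = ((a, False), (a, True)) \<or> (e1, e2) = ((a, True), (a, False))"
    and ws: "fst D' = ins_seg (fst D) i p [e1, e2]"
    and signs: "\<forall>x\<in>labels D. snd D' x = snd D x"
    using assms unfolding r1_move_def by blast
  let ?N = "\<lambda>m. if m = i then {e1, e2} else {}"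
  show ?thesis
  proof (rule linking_matrix_extend[where N = ?N])
    fix j k :: nat
    assume "j \<noteq> k"
    then have "{x. (x, False) \<in> ?N j \<and> (x, True) \<in> ?N k} = {}"
      by auto
    then show "(\<Sum>x | (x, False) \<in> ?N j \<and> (x, True) \<in> ?N k. snd D' x) = 0"
      by (simp only: sum.empty)
  qed (use ws set_ins_seg[OF i] e a signs in \<open>auto split: if_splits\<close>)
qed

lemma linking_matrix_r2_move:
  assumes "r2_move D D'"
  shows "linking_matrix D' = linking_matrix D"
proof -
  obtain i p i' q a b H where ab: "a \<noteq> b" and a: "a \<notin> labels D" and b: "b \<notin> labels D"
    and i: "i < length (fst D)" and i': "i' < length (fst D)"
    and H: "H = [(a, True), (b, True)] \<or> H = [(b, True), (a, True)]"
    and ws: "fst D' = ins_seg (ins_seg (fst D) i p [(a, False), (b, False)]) i' q H"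
    and opposite: "snd D' b = - snd D' a"
    and signs: "\<forall>x\<in>labels D. snd D' x = snd D x"
    using assms unfolding r2_move_def by blast
  have set_H: "set H = {(a, True), (b, True)}"
    using H by auto
  let ?N = "\<lambda>m. (if m = i then {(a, False), (b, False)} else {}) \<union>
                (if m = i' then {(a, True), (b, True)} else {})"
  show ?thesis
  proof (rule linking_matrix_extend[where N = ?N])
    fix m
    assume "m < length (fst D)"
    show "set (fst D' ! m) = set (fst D ! m) \<union> ?N m"
      using set_ins_seg[OF i, of p _ m] set_ins_seg[of i' _ q H m] i' set_H
      by (auto simp: ws)
  next
    fix j k :: nat
    have "{x. (x, False) \<in> ?N j \<and> (x, True) \<in> ?N k} = (if j = i \<and> k = i' then {a, b} else {})"
      by auto
    then show "(\<Sum>x | (x, False) \<in> ?N j \<and> (x, True) \<in> ?N k. snd D' x) = 0"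
      using ab opposite by simp
  qed (use ws a b signs in \<open>auto split: if_splits\<close>)
qed

lemma linking_matrix_r3_move:
  assumes "wf_gauss D" and "r3_move D D'"
  shows "linking_matrix D' = linking_matrix D"
proof -
  obtain a b c where
    T: "adj (fst D) (a, False) (b, False) \<or> adj (fst D) (b, False) (a, False)"
    and M: "adj (fst D) (a, True) (c, False) \<or> adj (fst D) (c, False) (a, True)"
    and B: "adj (fst D) (b, True) (c, True) \<or> adj (fst D) (c, True) (b, True)"
    and signs: "snd D' = snd D"
    and ws: "fst D' = map (map (swp (a, False) (b, False) \<circ> swp (a, True) (c, False)
                          \<circ> swp (b, True) (c, True))) (fst D)"
    using assms(2) unfolding r3_move_def Let_def by blast
  show ?thesis
  proof (rule linking_matrix_same_circles[OF _ _ signs])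
    fix m
    assume m: "m < length (fst D)"
    let ?S = "set (fst D ! m)"
    have "(a, False) \<in> ?S \<longleftrightarrow> (b, False) \<in> ?S" "(a, True) \<in> ?S \<longleftrightarrow> (c, False) \<in> ?S"
      "(b, True) \<in> ?S \<longleftrightarrow> (c, True) \<in> ?S"
      using adj_same_circle[OF assms(1) _ m] T M B by blast+
    moreover have "set (fst D' ! m) = swp (a, False) (b, False) ` swp (a, True) (c, False) `
                     swp (b, True) (c, True) ` ?S"
      using m by (simp add: ws image_comp)
    ultimately show "set (fst D' ! m) = ?S"
      by (simp add: swp_eq_transpose)
  qed (simp add: ws)
qed

lemma linking_matrix_forb_move:
  assumes "wf_gauss D" and "forb_move D D'"
  shows "linking_matrix D' = linking_matrix D"
proof -
  obtain x y h where xy: "adj (fst D) (x, h) (y, h)" and signs: "snd D' = snd D"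
    and ws: "fst D' = map (map (swp (x, h) (y, h))) (fst D)"
    using assms(2) unfolding forb_move_def by blast
  show ?thesis
  proof (rule linking_matrix_same_circles[OF _ _ signs])
    fix m
    assume m: "m < length (fst D)"
    show "set (fst D' ! m) = set (fst D ! m)"
      using adj_same_circle[OF assms(1) xy m] m by (simp add: ws swp_eq_transpose)
  qed (simp add: ws)
qed

lemma linking_equiv_iso:
  assumes "gauss_iso D D'"
  shows "linking_equiv D D'"
proof -
  obtain f \<sigma> r where len: "length (fst D') = length (fst D)"
    and \<sigma>: "\<sigma> permutes {..<length (fst D)}" and inj: "inj_on f (labels D)"
    and ws: "\<forall>i<length (fst D). fst D' ! i = rotate (r i) (map (apfst f) (fst D ! \<sigma> i))"
    and signs: "\<forall>a\<in>labels D. snd D' (f a) = snd D a"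
    using assms unfolding gauss_iso_def by blast
  have \<sigma>_less: "\<sigma> i < length (fst D)" if "i < length (fst D)" for i
    using permutes_in_image[OF \<sigma>] that by simp
  have circle: "set (fst D' ! i) = apfst f ` set (fst D ! \<sigma> i)" if "i < length (fst D)" for i
    using ws that by simp
  have arrows: "{b. arrow_from D' b j k} = f ` {a. arrow_from D a (\<sigma> j) (\<sigma> k)}"
    if j: "j < length (fst D)" and k: "k < length (fst D)" for j k
  proof -
    have arrow_image: "arrow_from D' (f a) j k \<longleftrightarrow> arrow_from D a (\<sigma> j) (\<sigma> k)"
      if a: "a \<in> labels D" for a
      using mem_apfst_image_iff[OF inj circle_labels_subset[OF \<sigma>_less[OF j]] a]
        mem_apfst_image_iff[OF inj circle_labels_subset[OF \<sigma>_less[OF k]] a]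
      unfolding arrow_from_def using j k \<sigma>_less len circle by simp
    have arrow_label: "b \<in> f ` labels D" if "arrow_from D' b j k" for b
    proof -
      have "(b, False) \<in> apfst f ` set (fst D ! \<sigma> j)"
        using that j circle unfolding arrow_from_def by simp
      then have "b \<in> f ` fst ` set (fst D ! \<sigma> j)"
        by (force simp: apfst_def map_prod_def)
      then show ?thesis
        using circle_labels_subset[OF \<sigma>_less[OF j]] by blast
    qed
    show ?thesis
    proof (intro set_eqI iffI)
      fix b
      assume "b \<in> {b. arrow_from D' b j k}"
      moreover obtain a where "a \<in> labels D" and "b = f a"
        using arrow_label calculation by blast
      ultimately show "b \<in> f ` {a. arrow_from D a (\<sigma> j) (\<sigma> k)}"
        using arrow_image by blast
    next
      fix b
      assume "b \<in> f ` {a. arrow_from D a (\<sigma> j) (\<sigma> k)}"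
      then obtain a where "arrow_from D a (\<sigma> j) (\<sigma> k)" and "b = f a"
        by blast
      then show "b \<in> {b. arrow_from D' b j k}"
        using arrow_image arrow_from_labels by simp
    qed
  qed
  have "linking_matrix D' j k = linking_matrix D (\<sigma> j) (\<sigma> k)"
    if j: "j < length (fst D)" and k: "k < length (fst D)" for j k
  proof -
    let ?A = "{a. arrow_from D a (\<sigma> j) (\<sigma> k)}"
    have "?A \<subseteq> labels D"
      using arrow_from_labels by blast
    then have "(\<Sum>b\<in>f ` ?A. snd D' b) = (\<Sum>a\<in>?A. snd D a)"
      using signs by (simp add: sum.reindex inj_on_subset[OF inj] subset_iff)
    then have "(\<Sum>b | arrow_from D' b j k. snd D' b) = (\<Sum>a\<in>?A. snd D a)"
      by (simp only: arrows[OF j k])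
    moreover have "j = k \<longleftrightarrow> \<sigma> j = \<sigma> k"
      using permutes_inj[OF \<sigma>] by (auto dest: injD)
    ultimately show ?thesis
      by (simp add: linking_matrix_def)
  qed
  then show ?thesis
    unfolding linking_equiv_def perm_similar_def using len \<sigma> by blast
qed

lemma linking_equiv_forb_step:
  assumes "forb_step D D'"
  shows "linking_equiv D D'"
  using assms unfolding forb_step_def reid_step_def
proof (elim disjE conjE)
  assume "gauss_iso D D'"
  then show ?thesis
    by (rule linking_equiv_iso)
next
  assume "r1_move D D'"
  then show ?thesis
    by (intro linking_equiv_eqI linking_matrix_r1_move) (auto simp: r1_move_def)
next
  assume "r2_move D D'"
  then show ?thesis
    by (intro linking_equiv_eqI linking_matrix_r2_move) (auto simp: r2_move_def)
next
  assume "wf_gauss D" and "r3_move D D'"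
  then show ?thesis
    by (intro linking_equiv_eqI linking_matrix_r3_move) (auto simp: r3_move_def Let_def)
next
  assume "wf_gauss D" and "forb_move D D'"
  then show ?thesis
    by (intro linking_equiv_eqI linking_matrix_forb_move) (auto simp: forb_move_def)
qed

lemma linking_equiv_forb_equiv: "forb_equiv D D' \<Longrightarrow> linking_equiv D D'"
  unfolding forb_equiv_def
  by (rule rtranclp_sym_closure_imp_equivp[OF equivp_linking_equiv linking_equiv_forb_step])

lemma reid_equiv_imp_forb_equiv: "reid_equiv D D' \<Longrightarrow> forb_equiv D D'"
  unfolding reid_equiv_def forb_equiv_def
  by (rule mono_rtranclp[rule_format]) (auto simp: forb_step_def)

lemma forb_matrix_reduced:
  assumes "reduced R"
  shows "forb_matrix R = linking_matrix R"
proof (intro ext)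
  fix j k
  let ?A = "{a. arrow_from R a j k}"
  have same_sign: "snd R a = snd R (SOME a. a \<in> ?A)" if "a \<in> ?A" for a
    using assms that some_in_eq[of ?A] unfolding reduced_def by blast
  have "j = k \<Longrightarrow> ?A = {}"
    using assms unfolding reduced_def by blast
  moreover have "(\<Sum>a\<in>?A. snd R a) = snd R (SOME a. a \<in> ?A) * int (card ?A)"
    using same_sign by (simp add: mult.commute)
  ultimately show "forb_matrix R j k = linking_matrix R j k"
    unfolding forb_matrix_def linking_matrix_def Let_def by auto
qed

theorem mainTheorem2:
  fixes D1 D2 R1 R2 :: gauss and n :: nat
  assumes "wf_gauss D1" and "wf_gauss D2"
    and "length (fst D1) = n"
    and "reid_equiv D1 D2"
    and "forb_equiv D1 R1" and "reduced R1"
    and "forb_equiv D2 R2" and "reduced R2"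
  shows "length (fst R1) = n \<and> length (fst R2) = n \<and>
         (\<exists>\<sigma>. \<sigma> permutes {..<n} \<and>
            (\<forall>j<n. \<forall>k<n. forb_matrix R2 j k = forb_matrix R1 (\<sigma> j) (\<sigma> k)))"
proof -
  have "linking_equiv D1 R1" "linking_equiv D1 D2" "linking_equiv D2 R2"
    using assms(4,5,7) by (simp_all add: linking_equiv_forb_equiv reid_equiv_imp_forb_equiv)
  then have "linking_equiv R1 R2"
    using equivp_linking_equiv by (meson equivp_symp equivp_transp)
  moreover have "length (fst R1) = n"
    using \<open>linking_equiv D1 R1\<close> assms(3) by (simp add: linking_equiv_def)
  ultimately show ?thesis
    using forb_matrix_reduced[OF assms(6)] forb_matrix_reduced[OF assms(8)]
    unfolding linking_equiv_def perm_similar_def by simp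
qed

end
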